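(* Let $k$ be a positive integer, $a_1>a_2>\cdots>a_{k+2}$ real numbers in $[a,b]$, and $w_1,\dots,w_{k+2}$ real weights with $w_1\ge 0$ and $(-1)^kw_{k+2}\ge 0$, such that $\sum_{i=1}^{k+2}w_ia_i^j=0$ for all integers $0\le j<k$. Then $\sum_{i=1}^{k+2}w_if(a_i)\ge 0$ for every $k$ times differentiable $f:[a,b]\to\mathbb{R}$ with $f^{(k)}\ge 0$. *)

theory Defs
  imports "HOL-Analysis.Analysis"
begin

end

theory Submission
  imports Defs "HOL-Computational_Algebra.Polynomial"
begin

(* The proof follows the classical argument for divided differences.  Let Z be the
   k interior nodes x_2 > ... > x_{k+1} and p the polynomial of degree < k that
   interpolates f on Z.  The moment conditions kill every polynomial of degree < k,
   so  sum w_i f(x_i) = sum w_i (f - p)(x_i) = w_1 (f - p)(x_1) + w_{k+2} (f - p)(x_{k+2}),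
   since f - p vanishes on Z.  The interpolation error g = f - p has g^(k) = f^(k) >= 0,
   and the generalised Rolle theorem shows that g(y) * prod_{z in Z} (y - z) >= 0 at
   every further point y: otherwise subtracting a suitable negative multiple of
   prod (X - z) produces a function with k+1 zeros whose k-th derivative is
   f^(k) - lam k! > 0 everywhere.  At y = x_1 this gives g(x_1) >= 0, at y = x_{k+2}
   it gives (-1)^k g(x_{k+2}) >= 0, and the sign hypotheses on w_1, w_{k+2} conclude. *)

section \<open>Chains of derivatives and the iterated Rolle theorem\<close>

definition deriv_chain :: "real \<Rightarrow> real \<Rightarrow> nat \<Rightarrow> (nat \<Rightarrow> real \<Rightarrow> real) \<Rightarrow> bool" where
  "deriv_chain a b n D \<longleftrightarrow>
     (\<forall>m<n. \<forall>t\<in>{a..b}. (D m has_real_derivative D (Suc m) t) (at t within {a..b}))"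

text \<open>Rolle's theorem for a function differentiable within \<open>[a,b]\<close>, applied to a
  subinterval \<open>[u,v]\<close>; inner points of \<open>[u,v]\<close> are interior to \<open>[a,b]\<close>.\<close>
lemma rolle_within:
  fixes F F' :: "real \<Rightarrow> real"
  assumes "a \<le> u" "u < v" "v \<le> b"
    and der: "\<forall>t\<in>{a..b}. (F has_real_derivative F' t) (at t within {a..b})"
    and "F u = 0" "F v = 0"
  shows "\<exists>\<xi>. u < \<xi> \<and> \<xi> < v \<and> F' \<xi> = 0"
proof -
  have "continuous_on {a..b} F"
    by (rule DERIV_continuous_on) (use der in auto)
  hence cont: "continuous_on {u..v} F"
    by (rule continuous_on_subset) (use assms in auto)
  have deriv: "(F has_derivative (*) (F' t)) (at t)" if "u < t" "t < v" for t
  proof -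
    have "t \<in> {a..b}" "at t within {a..b} = at t"
      using that assms by (auto intro: at_within_Icc_at)
    hence "(F has_real_derivative F' t) (at t)" using der by metis
    thus ?thesis by (simp add: has_field_derivative_def)
  qed
  obtain \<xi> where "u < \<xi>" "\<xi> < v" "(*) (F' \<xi>) = (\<lambda>h. 0)"
    using Rolle_deriv[OF \<open>u < v\<close> _ cont deriv] assms by force
  moreover from fun_cong[OF this(3), of 1] have "F' \<xi> = 0" by simp
  ultimately show ?thesis by blast
qed

text \<open>The Rolle points between consecutive zeros
  are again increasing, which drives the induction.\<close>
lemma rolle_iterated:
  assumes "deriv_chain a b n H"
    and "\<forall>i<n. z i < z (Suc i)" and "\<forall>i\<le>n. z i \<in> {a..b}" and "\<forall>i\<le>n. H 0 (z i) = 0"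
  shows "\<exists>\<xi>\<in>{a..b}. H n \<xi> = 0"
  using assms
proof (induction n arbitrary: H z)
  case 0
  thus ?case by auto
next
  case (Suc n)
  have chain0: "\<forall>t\<in>{a..b}. (H 0 has_real_derivative H 1 t) (at t within {a..b})"
    using Suc.prems(1) by (simp add: deriv_chain_def)
  have "\<exists>\<xi>. z i < \<xi> \<and> \<xi> < z (Suc i) \<and> H 1 \<xi> = 0" if "i < Suc n" for i
  proof -
    have "z i \<in> {a..b}" "z (Suc i) \<in> {a..b}" "z i < z (Suc i)"
      and "H 0 (z i) = 0" "H 0 (z (Suc i)) = 0"
      using Suc.prems(2-4) that by auto
    thus ?thesis using rolle_within[of a "z i" "z (Suc i)" b "H 0" "H 1"] chain0 by auto
  qed
  then obtain \<xi> where \<xi>: "\<And>i. i < Suc n \<Longrightarrow> z i < \<xi> i \<and> \<xi> i < z (Suc i) \<and> H 1 (\<xi> i) = 0"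
    by metis
  have "deriv_chain a b n (\<lambda>m. H (Suc m))"
    using Suc.prems(1) by (simp add: deriv_chain_def)
  moreover have "\<forall>i<n. \<xi> i < \<xi> (Suc i)"
  proof (intro allI impI)
    fix i assume "i < n"
    hence "\<xi> i < z (Suc i)" "z (Suc i) < \<xi> (Suc i)" using \<xi>[of i] \<xi>[of "Suc i"] by auto
    thus "\<xi> i < \<xi> (Suc i)" by linarith
  qed
  moreover have "\<forall>i\<le>n. \<xi> i \<in> {a..b}"
  proof (intro allI impI)
    fix i assume "i \<le> n"
    hence "z i < \<xi> i" "\<xi> i < z (Suc i)" "z i \<in> {a..b}" "z (Suc i) \<in> {a..b}"
      using \<xi>[of i] Suc.prems(3) by auto
    thus "\<xi> i \<in> {a..b}" by auto
  qed
  ultimately show ?case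
    using Suc.IH[of "\<lambda>m. H (Suc m)" \<xi>] \<xi> by auto
qed

lemma rolle_iterated_set:
  assumes "deriv_chain a b n H"
    and "finite Z" "card Z = Suc n" "Z \<subseteq> {a..b}" "\<forall>z\<in>Z. H 0 z = 0"
  shows "\<exists>\<xi>\<in>{a..b}. H n \<xi> = 0"
proof -
  define zs where "zs = sorted_list_of_set Z"
  have len: "length zs = Suc n" and set: "set zs = Z" and sorted: "sorted_wrt (<) zs"
    using assms(2,3) by (simp_all add: zs_def)
  have "\<forall>i<n. zs ! i < zs ! Suc i"
    using sorted len by (simp add: sorted_wrt_iff_nth_less)
  moreover have "zs ! i \<in> Z" if "i \<le> n" for i
    using set len that by (metis le_imp_less_Suc nth_mem)
  ultimately show ?thesis
    using rolle_iterated[OF assms(1), of "(!) zs"] assms(4,5) by blast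
qed

lemma deriv_chain_minus_poly:
  assumes "deriv_chain a b n D"
  shows "deriv_chain a b n (\<lambda>m t. D m t - poly ((pderiv ^^ m) p) t)"
  unfolding deriv_chain_def
proof (intro allI impI ballI)
  fix m t assume "m < n" "t \<in> {a..b}"
  have "(poly ((pderiv ^^ m) p) has_real_derivative poly ((pderiv ^^ Suc m) p) t)
          (at t within {a..b})"
    by (rule has_field_derivative_at_within) simp
  with assms \<open>m < n\<close> \<open>t \<in> {a..b}\<close>
  show "((\<lambda>t. D m t - poly ((pderiv ^^ m) p) t) has_real_derivative
          D (Suc m) t - poly ((pderiv ^^ Suc m) p) t) (at t within {a..b})"
    unfolding deriv_chain_def by (intro DERIV_diff) auto
qed

section \<open>Polynomials: iterated derivatives and interpolation\<close>

lemma higher_pderiv_degree_less: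
  fixes p :: "'a::{comm_semiring_1,semiring_no_zero_divisors,semiring_char_0} poly"
  assumes "degree p < k"
  shows "(pderiv ^^ k) p = 0"
  by (rule poly_eqI) (use assms in \<open>simp add: coeff_higher_pderiv coeff_eq_0\<close>)

lemma higher_pderiv_degree_eq:
  fixes p :: "'a::{comm_semiring_1,semiring_no_zero_divisors,semiring_char_0} poly"
  assumes "degree p = k"
  shows "(pderiv ^^ k) p = [:fact k * lead_coeff p:]"
proof (rule poly_eqI)
  fix n
  show "coeff ((pderiv ^^ k) p) n = coeff [:fact k * lead_coeff p:] n"
    using assms by (cases n) (simp_all add: coeff_higher_pderiv pochhammer_fact coeff_eq_0)
qed

lemma interpolation_poly:
  fixes Z :: "real set" and f :: "real \<Rightarrow> real"
  assumes "finite Z" "Z \<noteq> {}"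
  shows "\<exists>p. degree p < card Z \<and> (\<forall>z\<in>Z. poly p z = f z)"
  using assms
proof (induction Z rule: finite_ne_induct)
  case (singleton z)
  show ?case by (intro exI[of _ "[:f z:]"]) simp
next
  case (insert z Z)
  then obtain p where p: "degree p < card Z" "\<forall>y\<in>Z. poly p y = f y" by blast
  define q where "q = (\<Prod>y\<in>Z. [:-y, 1:])"
  have "degree q = card Z"
    by (simp add: q_def degree_prod_eq_sum_degree)
  moreover have "poly q y = 0" if "y \<in> Z" for y
    using that insert(1) by (simp add: q_def poly_prod)
  moreover have "poly q z \<noteq> 0"
    using insert(1,3) by (auto simp: q_def poly_prod)
  ultimately show ?case
    using p insert(1,3)
    by (intro exI[of _ "p + smult ((f z - poly p z) / poly q z) q"])
       (auto intro: degree_add_le_max[THEN le_less_trans] le_less_trans[OF degree_smult_le])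
qed

lemma moments_annihilate_poly:
  fixes p :: "real poly"
  assumes "degree p < k" and moments: "\<forall>j<k. (\<Sum>i\<in>I. w i * x i ^ j) = 0"
  shows "(\<Sum>i\<in>I. w i * poly p (x i)) = 0"
proof -
  have expand: "poly p t = (\<Sum>j<k. coeff p j * t ^ j)" for t
  proof -
    have "poly p t = (\<Sum>j\<le>degree p. coeff p j * t ^ j)" by (rule poly_altdef)
    also have "\<dots> = (\<Sum>j<k. coeff p j * t ^ j)"
      by (rule sum.mono_neutral_left) (use assms(1) in \<open>auto simp: coeff_eq_0\<close>)
    finally show ?thesis .
  qed
  have "(\<Sum>i\<in>I. w i * poly p (x i)) = (\<Sum>j<k. coeff p j * (\<Sum>i\<in>I. w i * x i ^ j))"
    by (simp add: expand sum_distrib_left mult_ac sum.swap[of _ I])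
  also have "\<dots> = 0" using moments by simp
  finally show ?thesis .
qed

section \<open>The sign of the interpolation error\<close>

text \<open>Otherwise \<open>G - \<lambda>\<cdot>\<Prod>(X - z)\<close> with \<open>\<lambda> < 0\<close> chosen to vanish at \<open>y\<close> has \<open>k+1\<close> zeros,
  but its \<open>k\<close>-th derivative \<open>G k - \<lambda> k!\<close> is positive.\<close>
lemma interpolation_error_sign:
  fixes G :: "nat \<Rightarrow> real \<Rightarrow> real"
  assumes chain: "deriv_chain a b k G" and pos: "\<forall>t\<in>{a..b}. G k t \<ge> 0"
    and Z: "finite Z" "card Z = k" "Z \<subseteq> {a..b}" and zeros: "\<forall>z\<in>Z. G 0 z = 0"
    and y: "y \<in> {a..b}" "y \<notin> Z"
  shows "G 0 y * (\<Prod>z\<in>Z. y - z) \<ge> 0"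
proof (rule ccontr)
  define q where "q = (\<Prod>z\<in>Z. [:-z, 1:])"
  define lam where "lam = G 0 y / poly q y"
  assume "\<not> ?thesis"
  hence neg: "G 0 y * poly q y < 0" by (simp add: q_def poly_prod)
  hence "lam < 0" "poly q y \<noteq> 0"
    by (auto simp: lam_def mult_less_0_iff divide_less_0_iff)
  define H where "H m t = G m t - poly ((pderiv ^^ m) (smult lam q)) t" for m t
  have "deriv_chain a b k H"
    unfolding H_def by (rule deriv_chain_minus_poly[OF chain])
  moreover have "\<forall>z\<in>insert y Z. H 0 z = 0"
    using zeros \<open>poly q y \<noteq> 0\<close> Z(1) by (auto simp: H_def lam_def q_def poly_prod)
  ultimately obtain \<xi> where \<xi>: "\<xi> \<in> {a..b}" "H k \<xi> = 0"
    using rolle_iterated_set[of a b k H "insert y Z"] Z y by auto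
  have "lead_coeff q = 1" by (simp add: q_def lead_coeff_prod)
  moreover have "degree q = k" using Z by (simp add: q_def degree_prod_eq_sum_degree)
  ultimately have "(pderiv ^^ k) (smult lam q) = [:fact k * lam:]"
    using higher_pderiv_degree_eq[of "smult lam q" k] \<open>lam < 0\<close> by simp
  hence "G k \<xi> = fact k * lam"
    using \<xi>(2) by (simp add: H_def)
  moreover have "fact k * lam < 0"
    using \<open>lam < 0\<close> by (simp add: mult_pos_neg)
  ultimately show False using pos \<xi>(1) by fastforce
qed

lemma interpolation_error_above:
  fixes G :: "nat \<Rightarrow> real \<Rightarrow> real"
  assumes "deriv_chain a b k G" "\<forall>t\<in>{a..b}. G k t \<ge> 0"
    and "finite Z" "card Z = k" "Z \<subseteq> {a..b}" "\<forall>z\<in>Z. G 0 z = 0"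
    and "y \<in> {a..b}" "\<forall>z\<in>Z. z < y"
  shows "G 0 y \<ge> 0"
proof -
  have "(\<Prod>z\<in>Z. y - z) > 0" by (rule prod_pos) (use assms(8) in auto)
  moreover have "G 0 y * (\<Prod>z\<in>Z. y - z) \<ge> 0"
    by (rule interpolation_error_sign) (use assms in auto)
  ultimately show ?thesis by (simp add: zero_le_mult_iff)
qed

lemma interpolation_error_below:
  fixes G :: "nat \<Rightarrow> real \<Rightarrow> real"
  assumes "deriv_chain a b k G" "\<forall>t\<in>{a..b}. G k t \<ge> 0"
    and "finite Z" "card Z = k" "Z \<subseteq> {a..b}" "\<forall>z\<in>Z. G 0 z = 0"
    and "y \<in> {a..b}" "\<forall>z\<in>Z. y < z"
  shows "(-1) ^ k * G 0 y \<ge> 0"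
proof -
  have "(\<Prod>z\<in>Z. y - z) = (\<Prod>z\<in>Z. (-1) * (z - y))" by simp
  also have "\<dots> = (-1) ^ k * (\<Prod>z\<in>Z. z - y)"
    by (simp only: prod.distrib prod_constant assms(4))
  finally have flip: "(\<Prod>z\<in>Z. y - z) = (-1) ^ k * (\<Prod>z\<in>Z. z - y)" .
  have "(\<Prod>z\<in>Z. z - y) > 0" by (rule prod_pos) (use assms(8) in auto)
  moreover have "G 0 y * (\<Prod>z\<in>Z. y - z) \<ge> 0"
    by (rule interpolation_error_sign) (use assms in auto)
  moreover have "G 0 y * (\<Prod>z\<in>Z. y - z) = ((-1) ^ k * G 0 y) * (\<Prod>z\<in>Z. z - y)"
    unfolding flip by (simp add: mult_ac)
  ultimately show ?thesis by (simp add: zero_le_mult_iff)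
qed

lemma decreasing_nodes:
  fixes x :: "nat \<Rightarrow> real"
  assumes step: "\<forall>i\<in>{1..<N}. x i > x (Suc i)" and "1 \<le> i" "i < j" "j \<le> N"
  shows "x j < x i"
  using assms(3,4)
proof (induction j)
  case 0
  thus ?case by simp
next
  case (Suc j)
  have "x (Suc j) < x j" using step assms(2) Suc.prems by auto
  thus ?case using Suc by (cases "i = j") auto
qed

lemma interior_nodes:
  fixes x :: "nat \<Rightarrow> real"
  assumes step: "\<forall>i\<in>{1..<k+2}. x i > x (Suc i)"
  shows "card (x ` {2..k+1}) = k" and "\<forall>z\<in>x ` {2..k+1}. z < x 1"
    and "\<forall>z\<in>x ` {2..k+1}. x (k+2) < z"
proof -
  have dec: "x j < x i" if "1 \<le> i" "i < j" "j \<le> k+2" for i j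
    using decreasing_nodes[OF step that] .
  have "inj_on x {2..k+1}"
  proof (rule inj_onI)
    fix i j assume "i \<in> {2..k+1}" "j \<in> {2..k+1}" "x i = x j"
    thus "i = j" using dec[of i j] dec[of j i] by (cases i j rule: linorder_cases) auto
  qed
  thus "card (x ` {2..k+1}) = k" by (simp add: card_image)
  show "\<forall>z\<in>x ` {2..k+1}. z < x 1" "\<forall>z\<in>x ` {2..k+1}. x (k+2) < z"
    using dec by auto
qed

lemma sum_interior_vanishes:
  fixes h :: "nat \<Rightarrow> real"
  assumes "2 \<le> N" "\<And>i. 1 < i \<Longrightarrow> i < N \<Longrightarrow> h i = 0"
  shows "(\<Sum>i=1..N. h i) = h 1 + h N"
proof -
  have "(\<Sum>i=1..N. h i) = (\<Sum>i\<in>{1, N}. h i)"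
    by (rule sum.mono_neutral_right) (use assms in auto)
  thus ?thesis using assms(1) by simp
qed

lemma weighted_sum_endpoints:
  fixes p :: "real poly" and f g :: "real \<Rightarrow> real" and w x :: "nat \<Rightarrow> real"
  assumes "1 \<le> k" "degree p < k" and moments: "\<forall>j<k. (\<Sum>i=1..k+2. w i * x i ^ j) = 0"
    and split: "\<forall>i\<in>{1..k+2}. f (x i) = g (x i) + poly p (x i)"
    and interior: "\<forall>i\<in>{2..k+1}. g (x i) = 0"
  shows "(\<Sum>i=1..k+2. w i * f (x i)) = w 1 * g (x 1) + w (k+2) * g (x (k+2))"
proof -
  have "(\<Sum>i=1..k+2. w i * f (x i))
        = (\<Sum>i=1..k+2. w i * g (x i)) + (\<Sum>i=1..k+2. w i * poly p (x i))"
    unfolding sum.distrib[symmetric] using split by (intro sum.cong) (simp_all add: algebra_simps)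
  also have "(\<Sum>i=1..k+2. w i * poly p (x i)) = 0"
    by (rule moments_annihilate_poly[OF assms(2) moments])
  also have "(\<Sum>i=1..k+2. w i * g (x i)) = w 1 * g (x 1) + w (k+2) * g (x (k+2))"
    by (rule sum_interior_vanishes) (use interior assms(1) in auto)
  finally show ?thesis by simp
qed

theorem mainTheorem8:
  fixes k :: nat and a b :: real and x w :: "nat \<Rightarrow> real"
    and f :: "real \<Rightarrow> real" and D :: "nat \<Rightarrow> real \<Rightarrow> real"
  assumes k_pos: "k \<ge> 1"
    and x_dec: "\<forall>i\<in>{1..<k+2}. x i > x (Suc i)"
    and x_in: "\<forall>i\<in>{1..k+2}. x i \<in> {a..b}"
    and w1: "w 1 \<ge> 0"
    and wlast: "(-1) ^ k * w (k+2) \<ge> 0"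
    and moments: "\<forall>j<k. (\<Sum>i=1..k+2. w i * x i ^ j) = 0"
    and D0: "\<forall>t\<in>{a..b}. D 0 t = f t"
    and Dderiv: "\<forall>m<k. \<forall>t\<in>{a..b}. (D m has_real_derivative D (Suc m) t) (at t within {a..b})"
    and Dk: "\<forall>t\<in>{a..b}. D k t \<ge> 0"
  shows "(\<Sum>i=1..k+2. w i * f (x i)) \<ge> 0"
proof -
  define Z where "Z = x ` {2..k+1}"
  have Z: "finite Z" "card Z = k" "Z \<subseteq> {a..b}"
    using interior_nodes(1)[OF x_dec] x_in by (auto simp: Z_def)
  obtain p where p: "degree p < k" "\<forall>z\<in>Z. poly p z = f z"
    using interpolation_poly[OF Z(1)] Z(2) k_pos by fastforce
  define G where "G m t = D m t - poly ((pderiv ^^ m) p) t" for m t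
  have chain: "deriv_chain a b k G"
    unfolding G_def by (rule deriv_chain_minus_poly) (use Dderiv in \<open>simp add: deriv_chain_def\<close>)
  have Gk: "\<forall>t\<in>{a..b}. G k t \<ge> 0"
    using Dk higher_pderiv_degree_less[OF p(1)] by (simp add: G_def)
  have f_split: "\<forall>t\<in>{a..b}. f t = G 0 t + poly p t"
    using D0 by (simp add: G_def)
  have Gz: "\<forall>z\<in>Z. G 0 z = 0"
    using f_split p(2) Z(3) by force
  have "G 0 (x 1) \<ge> 0"
    using interpolation_error_above[OF chain Gk Z Gz] interior_nodes(2)[OF x_dec] x_in
    by (simp add: Z_def)
  moreover have "(-1) ^ k * G 0 (x (k+2)) \<ge> 0"
    using interpolation_error_below[OF chain Gk Z Gz] interior_nodes(3)[OF x_dec] x_in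
    by (simp add: Z_def)
  moreover have "(\<Sum>i=1..k+2. w i * f (x i)) = w 1 * G 0 (x 1) + w (k+2) * G 0 (x (k+2))"
    by (rule weighted_sum_endpoints[OF k_pos p(1) moments]) (use x_in f_split Gz in \<open>auto simp: Z_def\<close>)
  moreover have "w (k+2) * G 0 (x (k+2)) = ((-1) ^ k * w (k+2)) * ((-1) ^ k * G 0 (x (k+2)))"
    by (simp add: mult_ac flip: power_mult_distrib)
  ultimately show ?thesis
    using w1 wlast by (metis add_nonneg_nonneg mult_nonneg_nonneg)
qed

end
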